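(* Let $\Delta,\Sigma$ be alphabets, $\varphi:\Delta\to2^{\Sigma^*}$ a regular language substitution, and $K_1,K_2\subseteq\Delta^+$ regular languages such that $\mathcal{R}_1=(K_1,\varphi)$ and $\mathcal{R}_2=(K_2,\varphi)$ are finite. Then the symmetric difference $\mathcal{R}_1\,\Delta\,\mathcal{R}_2=(\mathcal{R}_1\cup\mathcal{R}_2)-(\mathcal{R}_1\cap\mathcal{R}_2)$ is a finite rational set of regular languages that can be expressed with the language substitution $\varphi$, i.e. it equals $(K_3,\varphi)$ for some regular $K_3\subseteq\Delta^+$.
   Context: A regular language substitution $\varphi:\Delta\to2^{\Sigma^*}$ maps each symbol to a regular language over $\Sigma$, extended by $\varphi(\delta w)=\varphi(\delta)\varphi(w)$. For $K\subseteq\Delta^+$, $(K,\varphi)=\{\varphi(w)\mid w\in K\}$; when $K$ is regular this set is a rational set of regular languages. *)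

theory Defs
  imports Main
begin

text \<open>Alphabets are modelled as finite types; words are lists; languages are sets of lists.\<close>

definition conc :: "'a list set \<Rightarrow> 'a list set \<Rightarrow> 'a list set" where
  "conc A B = {u @ v | u v. u \<in> A \<and> v \<in> B}"

inductive_set kstar :: "'a list set \<Rightarrow> 'a list set" for A :: "'a list set" where
  kstar_Nil: "[] \<in> kstar A"
| kstar_app: "u \<in> A \<Longrightarrow> v \<in> kstar A \<Longrightarrow> u @ v \<in> kstar A"

inductive regular :: "'a list set \<Rightarrow> bool" where
  reg_empty: "regular {}"
| reg_eps: "regular {[]}"
| reg_letter: "regular {[a]}"
| reg_union: "regular A \<Longrightarrow> regular B \<Longrightarrow> regular (A \<union> B)"
| reg_conc: "regular A \<Longrightarrow> regular B \<Longrightarrow> regular (conc A B)"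
| reg_star: "regular A \<Longrightarrow> regular (kstar A)"

primrec subst_word :: "('d \<Rightarrow> 's list set) \<Rightarrow> 'd list \<Rightarrow> 's list set" where
  "subst_word \<phi> [] = {[]}"
| "subst_word \<phi> (d # w) = conc (\<phi> d) (subst_word \<phi> w)"

definition regular_subst :: "('d \<Rightarrow> 's list set) \<Rightarrow> bool" where
  "regular_subst \<phi> \<longleftrightarrow> (\<forall>d. regular (\<phi> d))"

definition subst_set :: "'d list set \<Rightarrow> ('d \<Rightarrow> 's list set) \<Rightarrow> 's list set set" where
  "subst_set K \<phi> = subst_word \<phi> ` K"

definition plus_words :: "'d list set" where
  "plus_words = {w. w \<noteq> []}"

end

theory Submission
  imports Defs
begin

text \<open>Every finite language is regular, so a finite set of languages of the form
  \<open>\<phi>(w)\<close> is expressed by the finite regular language of chosen representatives \<open>w\<close>.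
  The symmetric difference of \<open>(K\<^sub>1, \<phi>)\<close> and \<open>(K\<^sub>2, \<phi>)\<close> is a finite subset of
  \<open>(K\<^sub>1 \<union> K\<^sub>2, \<phi>)\<close>.\<close>

lemma regular_singleton: "regular {w}"
proof (induction w)
  case Nil
  show ?case by (rule reg_eps)
next
  case (Cons a w)
  have "conc {[a]} {w} = {a # w}" by (auto simp: conc_def)
  with reg_conc[OF reg_letter Cons] show ?case by metis
qed

lemma regular_finite: "finite A \<Longrightarrow> regular A"
proof (induction A rule: finite_induct)
  case empty
  show ?case by (rule reg_empty)
next
  case (insert w A)
  have "insert w A = {w} \<union> A" by auto
  with reg_union[OF regular_singleton insert.IH] show ?case by metis
qed

lemma subst_set_Un: "subst_set (K \<union> L) \<phi> = subst_set K \<phi> \<union> subst_set L \<phi>"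
  by (simp add: subst_set_def image_Un)

lemma finite_subset_subst_set_regular:
  assumes "finite \<R>" and "\<R> \<subseteq> subst_set K \<phi>" and "K \<subseteq> plus_words"
  shows "\<exists>K'. regular K' \<and> K' \<subseteq> plus_words \<and> subst_set K' \<phi> = \<R>"
proof -
  obtain K' where "K' \<subseteq> K" "finite K'" "\<R> = subst_set K' \<phi>"
    using finite_subset_image[OF assms(1,2)[unfolded subst_set_def]]
    unfolding subst_set_def by blast
  with assms(3) regular_finite show ?thesis by blast
qed

theorem proposition11:
  fixes \<phi> :: "'d::finite \<Rightarrow> 's::finite list set"
    and K1 K2 :: "'d list set"
  assumes "regular_subst \<phi>"
    and "regular K1" and "K1 \<subseteq> plus_words"
    and "regular K2" and "K2 \<subseteq> plus_words"
    and "finite (subst_set K1 \<phi>)"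
    and "finite (subst_set K2 \<phi>)"
  shows "finite ((subst_set K1 \<phi> \<union> subst_set K2 \<phi>) - (subst_set K1 \<phi> \<inter> subst_set K2 \<phi>))
    \<and> (\<exists>K3. regular K3 \<and> K3 \<subseteq> plus_words \<and>
          subst_set K3 \<phi> = (subst_set K1 \<phi> \<union> subst_set K2 \<phi>) - (subst_set K1 \<phi> \<inter> subst_set K2 \<phi>))"
proof -
  let ?\<R> = "(subst_set K1 \<phi> \<union> subst_set K2 \<phi>) - (subst_set K1 \<phi> \<inter> subst_set K2 \<phi>)"
  have finite: "finite ?\<R>" using assms(6,7) by blast
  have "?\<R> \<subseteq> subst_set (K1 \<union> K2) \<phi>" by (auto simp: subst_set_Un)
  moreover have "K1 \<union> K2 \<subseteq> plus_words" using assms(3,5) by blast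
  ultimately show ?thesis
    using finite finite_subset_subst_set_regular by blast
qed

end
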